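(* Let $n>3$ and let $\mathcal{L}\subseteq\mathcal{L}_n$ be a linear subspace that is a Jordan algebra, is invariant under the conjugation action of $S_n$, and contains $\mathrm{Anti}_n$. Then $\mathrm{DS}_n\subseteq\mathcal{L}$.
   Context: $\mathbf{1}\in\mathbb{R}^n$ is the all-ones column vector; $\mathcal{L}_n=\{Q\in \mathrm{Mat}_n(\mathbb{R}): Q\mathbf{1}=0\}$. $\mathrm{DS}_n:=\{Q\in\mathcal{L}_n:\mathbf{1}^TQ=0\}$ (zero row and column sums); $\mathrm{Anti}_n$ is the space of antisymmetric matrices in $\mathcal{L}_n$ (isomorphic as $S_n$-module to the irreducible $\{n-2,1^2\}$). For $\sigma\in S_n$, $K_\sigma$ is the permutation matrix with $e_iK_\sigma=e_{\sigma(i)}$, and $S_n$ acts by $\sigma\cdot X=K_\sigma^TXK_\sigma$. A Jordan algebra is a subspace closed under $AB+BA$. *)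

theory Defs
  imports "HOL-Analysis.Analysis" "HOL-Combinatorics.Permutations"
begin

text \<open>n x n real matrices are modelled as real^'n^'n with a finite index type 'n, n = CARD('n).\<close>

definition ones :: "real ^ 'n" where
  "ones = (\<chi> i. 1)"

definition Lmat :: "(real ^ 'n ^ 'n) set" where
  "Lmat = {Q. Q *v ones = 0}"

definition DSmat :: "(real ^ 'n ^ 'n) set" where
  "DSmat = {Q. Q \<in> Lmat \<and> ones v* Q = 0}"

definition Antimat :: "(real ^ 'n ^ 'n) set" where
  "Antimat = {Q. Q \<in> Lmat \<and> transpose Q = - Q}"

definition permmat :: "('n \<Rightarrow> 'n) \<Rightarrow> real ^ 'n ^ 'n" where
  "permmat \<sigma> = (\<chi> i j. if \<sigma> i = j then 1 else 0)"

definition perm_act :: "('n \<Rightarrow> 'n) \<Rightarrow> real ^ 'n ^ 'n \<Rightarrow> real ^ 'n ^ 'n" where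
  "perm_act \<sigma> X = transpose (permmat \<sigma>) ** X ** permmat \<sigma>"

definition jordan_closed :: "(real ^ 'n ^ 'n) set \<Rightarrow> bool" where
  "jordan_closed L \<longleftrightarrow> (\<forall>A\<in>L. \<forall>B\<in>L. A ** B + B ** A \<in> L)"

definition Sn_invariant :: "(real ^ 'n ^ 'n) set \<Rightarrow> bool" where
  "Sn_invariant L \<longleftrightarrow> (\<forall>\<sigma>. \<sigma> permutes (UNIV :: 'n set) \<longrightarrow> (\<forall>X\<in>L. perm_act \<sigma> X \<in> L))"

end

theory Submission imports Defs begin

text \<open>The Jordan algebra generated by \<open>Anti\<^sub>n\<close> alone already contains \<open>DS\<^sub>n\<close>.
  For distinct \<open>i, j, k\<close> the antisymmetric matrix \<open>C\<^sub>i\<^sub>j\<^sub>k\<close> of the oriented triangle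
  \<open>i \<rightarrow> j \<rightarrow> k \<rightarrow> i\<close> lies in \<open>Anti\<^sub>n\<close>, and with a fourth index \<open>l\<close> a fixed linear combination of
  Jordan products of \<open>C\<^sub>i\<^sub>j\<^sub>k, C\<^sub>i\<^sub>j\<^sub>l, C\<^sub>i\<^sub>k\<^sub>l, C\<^sub>j\<^sub>k\<^sub>l\<close> equals
  \<open>M\<^sub>i\<^sub>j = E\<^sub>i\<^sub>j + E\<^sub>j\<^sub>i - E\<^sub>i\<^sub>i - E\<^sub>j\<^sub>j\<close>. These \<open>M\<^sub>i\<^sub>j\<close> span the symmetric matrices with zero row sums,
  and every \<open>Q \<in> DS\<^sub>n\<close> is the sum of such a symmetric matrix and an element of \<open>Anti\<^sub>n\<close>.\<close>

definition matrix_unit :: "'n \<Rightarrow> 'n \<Rightarrow> real^'n^'n" where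
  "matrix_unit p q = (\<chi> a b. if a = p \<and> b = q then 1 else 0)"

definition triangle_matrix :: "'n \<Rightarrow> 'n \<Rightarrow> 'n \<Rightarrow> real^'n^'n" where
  "triangle_matrix a b c =
     matrix_unit a b - matrix_unit b a + matrix_unit b c - matrix_unit c b
     + matrix_unit c a - matrix_unit a c"

definition sym_unit :: "'n \<Rightarrow> 'n \<Rightarrow> real^'n^'n" where
  "sym_unit a b = matrix_unit a b + matrix_unit b a - matrix_unit a a - matrix_unit b b"

definition jordan_prod :: "real^'n^'n \<Rightarrow> real^'n^'n \<Rightarrow> real^'n^'n" where
  "jordan_prod A B = A ** B + B ** A"

lemma matrix_add_rdistrib: "(A + B) ** C = A ** C + B ** (C::real^'n^'n)"
  by (vector matrix_matrix_mult_def sum.distrib[symmetric] field_simps)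

lemma matrix_diff_rdistrib: "(A - B) ** C = A ** C - B ** (C::real^'n^'n)"
  by (vector matrix_matrix_mult_def sum_subtractf[symmetric] field_simps)

lemma matrix_diff_ldistrib: "C ** (A - B) = C ** A - C ** (B::real^'n^'n)"
  by (vector matrix_matrix_mult_def sum_subtractf[symmetric] field_simps)

lemma transpose_add: "transpose (A + B) = transpose A + transpose (B::real^'n^'n)"
  by (simp add: vec_eq_iff transpose_def)

lemma transpose_diff: "transpose (A - B) = transpose A - transpose (B::real^'n^'n)"
  by (simp add: vec_eq_iff transpose_def)

lemma matrix_unit_mult:
  "matrix_unit p q ** matrix_unit r s = (if q = r then matrix_unit p s else 0)"
proof -
  have "(matrix_unit p q ** matrix_unit r s) $ a $ b = (if a = p \<and> q = r \<and> b = s then 1 else 0)"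
    for a b
  proof -
    have "(\<lambda>k. (if a = p \<and> k = q then 1 else 0) * (if k = r \<and> b = s then 1 else 0))
        = (\<lambda>k. if k = q then (if a = p \<and> q = r \<and> b = s then 1 else 0) else (0::real))"
      by auto
    then show ?thesis
      by (simp only: matrix_matrix_mult_def matrix_unit_def vec_lambda_beta sum.delta finite UNIV_I if_True)
  qed
  then show ?thesis
    by (auto simp: vec_eq_iff matrix_unit_def)
qed

lemma matrix_unit_mulv_ones: "matrix_unit p q *v ones = (\<chi> x. if x = p then 1 else 0)"
  by (simp add: vec_eq_iff matrix_unit_def matrix_vector_mult_def ones_def
      if_distrib if_distribR cong: if_cong)

lemma transpose_matrix_unit: "transpose (matrix_unit p q) = matrix_unit q p"
  by (auto simp: vec_eq_iff matrix_unit_def transpose_def)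

lemma triangle_matrix_in_Antimat: "triangle_matrix a b c \<in> Antimat"
proof -
  have "triangle_matrix a b c *v ones = 0"
    by (simp add: triangle_matrix_def matrix_vector_mult_add_rdistrib
        matrix_vector_mult_diff_rdistrib matrix_unit_mulv_ones vec_eq_iff)
  moreover have "transpose (triangle_matrix a b c) = - triangle_matrix a b c"
    by (simp add: triangle_matrix_def transpose_add transpose_diff transpose_matrix_unit)
  ultimately show ?thesis
    by (simp add: Antimat_def Lmat_def)
qed

lemma sym_unit_jordan_identity:
  assumes "distinct [i, j, k, l]"
  shows "(8::real) *\<^sub>R sym_unit i j =
      2 *\<^sub>R jordan_prod (triangle_matrix i j k) (triangle_matrix i j k)
    + 2 *\<^sub>R jordan_prod (triangle_matrix i j l) (triangle_matrix i j l)
    - jordan_prod (triangle_matrix i k l) (triangle_matrix i k l)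
    - jordan_prod (triangle_matrix j k l) (triangle_matrix j k l)
    - 2 *\<^sub>R jordan_prod (triangle_matrix i j k) (triangle_matrix i j l)"
proof -
  have distinct: "i \<noteq> j" "i \<noteq> k" "i \<noteq> l" "j \<noteq> k" "j \<noteq> l" "k \<noteq> l"
    "j \<noteq> i" "k \<noteq> i" "l \<noteq> i" "k \<noteq> j" "l \<noteq> j" "l \<noteq> k"
    using assms by auto
  show ?thesis
    unfolding jordan_prod_def triangle_matrix_def
    apply (simp only: matrix_add_rdistrib matrix_diff_rdistrib matrix_diff_ldistrib
        matrix_add_ldistrib matrix_unit_mult)
    apply (simp add: distinct)
    apply (simp add: vec_eq_iff sym_unit_def)
    done
qed

lemma exists_not_in_small_set:
  assumes "card A < CARD('a::finite)"
  shows "\<exists>x::'a. x \<notin> A"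
  using assms card_mono[OF finite, of UNIV A] by auto

lemma sym_unit_in_jordan_closed:
  fixes L :: "(real ^ 'n ^ 'n) set"
  assumes card: "CARD('n) > 3" and L: "subspace L" "jordan_closed L" "Antimat \<subseteq> L"
  shows "sym_unit i j \<in> L"
proof (cases "i = j")
  case True
  then show ?thesis
    using subspace_0[OF L(1)] by (simp add: sym_unit_def)
next
  case False
  have small: "card {i, j, m} < CARD('n)" for m
    using card card_mono[of "{i, j, m}"] by (simp add: card_insert_if)
  obtain k where k: "k \<notin> {i, j}"
    using exists_not_in_small_set[OF small[of i]] by auto
  obtain l where l: "l \<notin> {i, j, k}"
    using exists_not_in_small_set[OF small[of k]] by auto
  have "jordan_prod (triangle_matrix a b c) (triangle_matrix a' b' c') \<in> L" for a b c a' b' c'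
    using L(2,3) triangle_matrix_in_Antimat unfolding jordan_closed_def jordan_prod_def by blast
  then have "(8::real) *\<^sub>R sym_unit i j \<in> L"
    using False k l
    by (subst sym_unit_jordan_identity[of i j k l])
      (auto intro!: subspace_diff[OF L(1)] subspace_add[OF L(1)] subspace_scale[OF L(1)])
  then have "(1/8::real) *\<^sub>R ((8::real) *\<^sub>R sym_unit i j) \<in> L"
    by (rule subspace_scale[OF L(1)])
  then show ?thesis
    by simp
qed

lemma zero_row_sums_decomp:
  fixes X :: "real^'n^'n"
  assumes "X *v ones = 0"
  shows "(\<Sum>i\<in>UNIV. \<Sum>j\<in>UNIV. X$i$j *\<^sub>R (matrix_unit i j - matrix_unit i i)) = X"
proof -
  have row_sum: "(\<Sum>j\<in>UNIV. X$a$j) = 0" for a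
    using arg_cong[OF assms, of "\<lambda>v. v $ a"] by (simp add: matrix_vector_mult_def ones_def)
  have "(\<Sum>i\<in>UNIV. \<Sum>j\<in>UNIV. X$i$j *\<^sub>R (matrix_unit i j - matrix_unit i i)) $ a $ b = X $ a $ b"
    for a b
  proof -
    have only_row_a:
      "(\<lambda>i. \<Sum>j\<in>UNIV. X$i$j * ((if a = i \<and> b = j then 1 else 0) - (if a = i \<and> b = i then 1 else 0)))
     = (\<lambda>i. if a = i then (\<Sum>j\<in>UNIV. X$a$j * ((if b = j then 1 else 0) - (if a = b then 1 else 0))) else 0)"
      by auto
    have only_column_b: "(\<lambda>j. X$a$j * (if b = j then 1 else 0)) = (\<lambda>j. if b = j then X$a$b else 0)"
      by auto
    have "(\<Sum>i\<in>UNIV. \<Sum>j\<in>UNIV. X$i$j *\<^sub>R (matrix_unit i j - matrix_unit i i)) $ a $ b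
        = (\<Sum>i\<in>UNIV. \<Sum>j\<in>UNIV. X$i$j * ((if a = i \<and> b = j then 1 else 0) - (if a = i \<and> b = i then 1 else 0)))"
      by (simp only: sum_component vector_scaleR_component vector_minus_component matrix_unit_def
          vec_lambda_beta real_scaleR_def)
    also have "\<dots> = (\<Sum>j\<in>UNIV. X$a$j * ((if b = j then 1 else 0) - (if a = b then 1 else 0)))"
      by (simp only: only_row_a sum.delta' finite UNIV_I if_True)
    also have "\<dots> = (\<Sum>j\<in>UNIV. X$a$j * (if b = j then 1 else 0)) - (\<Sum>j\<in>UNIV. X$a$j) * (if a = b then 1 else 0)"
      by (simp only: right_diff_distrib sum_subtractf sum_distrib_right)
    also have "\<dots> = X$a$b"
      by (simp only: only_column_b sum.delta' finite UNIV_I if_True row_sum mult_zero_left diff_zero)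
    finally show ?thesis .
  qed
  then show ?thesis
    by (simp add: vec_eq_iff)
qed

lemma symmetric_zero_row_sums_decomp:
  fixes S :: "real^'n^'n"
  assumes "S *v ones = 0" and "transpose S = S"
  shows "S = (1/2::real) *\<^sub>R (\<Sum>i\<in>UNIV. \<Sum>j\<in>UNIV. S$i$j *\<^sub>R sym_unit i j)"
proof -
  have symmetric: "S$j$i = S$i$j" for i j
    using arg_cong[OF assms(2), of "\<lambda>A. A $ i $ j"] by (simp add: transpose_def)
  have sym_unit_split:
    "sym_unit i j = (matrix_unit i j - matrix_unit i i) + (matrix_unit j i - matrix_unit j j)" for i j
    by (simp add: sym_unit_def algebra_simps)
  have "(\<Sum>i\<in>UNIV. \<Sum>j\<in>UNIV. S$i$j *\<^sub>R (matrix_unit j i - matrix_unit j j))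
      = (\<Sum>j\<in>UNIV. \<Sum>i\<in>UNIV. S$j$i *\<^sub>R (matrix_unit j i - matrix_unit j j))"
    by (subst sum.swap) (simp add: symmetric)
  also have "\<dots> = S"
    by (rule zero_row_sums_decomp[OF assms(1)])
  finally have "(\<Sum>i\<in>UNIV. \<Sum>j\<in>UNIV. S$i$j *\<^sub>R sym_unit i j) = S + S"
    by (simp add: sym_unit_split scaleR_add_right sum.distrib zero_row_sums_decomp[OF assms(1)])
  then show ?thesis
    by (simp add: scaleR_add_right)
qed

lemma symmetric_zero_row_sums_in_jordan_closed:
  fixes L :: "(real ^ 'n ^ 'n) set"
  assumes "CARD('n) > 3" and L: "subspace L" "jordan_closed L" "Antimat \<subseteq> L"
    and S: "S *v ones = 0" "transpose S = S"
  shows "S \<in> L"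
  using sym_unit_in_jordan_closed[OF assms(1) L]
  by (subst symmetric_zero_row_sums_decomp[OF S])
    (intro subspace_scale[OF L(1)] subspace_sum[OF L(1)]; simp)

theorem mainTheorem16:
  fixes L :: "(real ^ 'n ^ 'n) set"
  assumes "CARD('n) > 3"
    and "subspace L"
    and "L \<subseteq> Lmat"
    and "jordan_closed L"
    and "Sn_invariant L"
    and "Antimat \<subseteq> L"
  shows "DSmat \<subseteq> L"
proof
  fix Q :: "real^'n^'n"
  assume "Q \<in> DSmat"
  then have rows: "Q *v ones = 0" and columns: "transpose Q *v ones = 0"
    by (auto simp: DSmat_def Lmat_def)
  define A where "A = (1/2::real) *\<^sub>R (Q - transpose Q)"
  define S where "S = (1/2::real) *\<^sub>R (Q + transpose Q)"
  have "A *v ones = 0"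
    by (simp only: A_def scaleR_matrix_vector_assoc[symmetric] matrix_vector_mult_diff_rdistrib
        rows columns diff_zero scaleR_zero_right)
  moreover have "transpose A = - A"
    by (simp add: A_def vec_eq_iff transpose_def field_simps)
  ultimately have "A \<in> L"
    using assms(6) by (auto simp: Antimat_def Lmat_def)
  moreover have "S \<in> L"
    using assms(1,2,4,6)
    by (rule symmetric_zero_row_sums_in_jordan_closed)
      (simp_all add: S_def transpose_scalar transpose_add add.commute
        scaleR_matrix_vector_assoc[symmetric] matrix_vector_mult_add_rdistrib rows columns
        del: transpose_matrix_vector)
  moreover have "Q = A + S"
    by (simp add: A_def S_def vec_eq_iff diff_divide_distrib add_divide_distrib)
  ultimately show "Q \<in> L"
    using subspace_add[OF assms(2)] by simp
qed

end
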